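(* Let $a\in(-\infty,1)$ and $\omega\in\mathbb D_a$. Then $T(\omega)(0)=0$, $T(\omega)'(x)\ge0$ for all $x\ge0$, and $s\mapsto T(\omega)(\sqrt s)$ is concave on $[0,\infty)$.
   Context: Let $\rho(x)=(1+|x|)^{-1/2}$ and $\eta_a=\frac{1}{2^{9/2}(4+|a|)^3}$. $\mathbb D_a$ is the set of continuous even functions $\omega$ on $\mathbb R$ with $\|\rho\omega\|_{L^\infty}<\infty$ such that $\omega(0)=1$; $(1-x^2)_+\le\omega(x)\le1$ for all $x$; $\omega$ is non-increasing on $[0,\infty)$; $s\mapsto\omega(\sqrt s)$ is convex on $[0,\infty)$; and the left derivative satisfies $\omega'_-(1/2)\le-\eta_a$. $T(\omega)(x)=\frac1\pi\int_0^\infty\ln\left|\frac{x^2-y^2}{y^2}\right|\omega(y)\,dy$. *)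

theory Defs
  imports "HOL-Analysis.Analysis"
begin

definition rho :: "real \<Rightarrow> real" where
  "rho x = (1 + \<bar>x\<bar>) powr (-1/2)"

definition eta :: "real \<Rightarrow> real" where
  "eta a = 1 / (2 powr (9/2) * (4 + \<bar>a\<bar>) ^ 3)"

text \<open>The left derivative at 1/2 is the derivative within the
  left half-line; the weighted sup-norm condition is boundedness of rho times omega
  (omega is continuous, so the essential sup equals the sup).\<close>
definition DD :: "real \<Rightarrow> (real \<Rightarrow> real) set" where
  "DD a = {\<omega>. continuous_on UNIV \<omega>
      \<and> (\<forall>x. \<omega> (-x) = \<omega> x)
      \<and> bounded (range (\<lambda>x. rho x * \<omega> x))
      \<and> \<omega> 0 = 1
      \<and> (\<forall>x. max 0 (1 - x\<^sup>2) \<le> \<omega> x \<and> \<omega> x \<le> 1)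
      \<and> (\<forall>x y. 0 \<le> x \<and> x \<le> y \<longrightarrow> \<omega> y \<le> \<omega> x)
      \<and> convex_on {0..} (\<lambda>s. \<omega> (sqrt s))
      \<and> (\<exists>L. (\<omega> has_real_derivative L) (at (1/2) within {..1/2}) \<and> L \<le> - eta a)}"

definition T :: "(real \<Rightarrow> real) \<Rightarrow> real \<Rightarrow> real" where
  "T \<omega> x = (1 / pi) * (LBINT y:{0<..}. ln \<bar>(x\<^sup>2 - y\<^sup>2) / y\<^sup>2\<bar> * \<omega> y)"

end

theory Submission
  imports Defs "HOL-Real_Asymp.Real_Asymp"
begin

text \<open>
  Put g(u) = \<omega>(sqrt u). Then g is convex and non-increasing with g(0) = 1 and g(u) \<ge> 1 - u, so
  the right slope -g'(u+) is non-increasing with values in [0, 1]. Integrating its generalised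
  inverse t (a layer-cake argument) gives g(u) = int_0^1 (1 - min u (t \<tau>)) d\<tau>, so \<omega> is a
  mixture of the truncated parabolas 1 - min y^2 s^2 with s = sqrt (t \<tau>). By Fubini,
  pi T \<omega> x = int_0^1 P(x, sqrt (t \<tau>)) d\<tau>, where P(x, s) is the transform of one truncated
  parabola; it has a closed form because the kernel integrates to 0 over (0, \<infinity>). The
  x-derivative of P lies in [0, 4 s^2] for x \<ge> 0 and the derivative of \<sigma> \<mapsto> P(sqrt \<sigma>, s) is
  non-increasing, both by w \<le> artanh w \<le> w / (1 - w^2). Since int_0^1 t \<le> 1, dominated
  convergence allows differentiation under the integral sign, and integration preserves concavity.
\<close>

lemma concave_on_atLeast_if_deriv_antimono:
  fixes f f' :: "real \<Rightarrow> real"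
  assumes cont: "continuous_on {a..} f"
    and deriv: "\<And>x. a < x \<Longrightarrow> (f has_real_derivative f' x) (at x)"
    and antimono: "\<And>x y. a < x \<Longrightarrow> x \<le> y \<Longrightarrow> f' y \<le> f' x"
  shows "concave_on {a..} f"
proof -
  have interior: "concave_on {a<..} f"
    unfolding concave_on_def
    by (rule convex_on_realI[where f'="\<lambda>x. - f' x"]) (auto intro!: derivative_eq_intros deriv antimono)
  show ?thesis
  proof (rule concave_on_linorderI)
    fix t x y :: real
    assume t: "0 < t" "t < 1" and xy: "x \<in> {a..}" "y \<in> {a..}" "x < y"
    define g where "g z = (1 - t) * f z + t * f y - f ((1 - t) * z + t * y)" for z
    have g_nonpos: "g z \<le> 0" if "a < z" for z
      using concave_onD[OF interior, of t z y] that t xy by (simp add: g_def)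
    have "g x \<le> 0"
    proof (cases "a < x")
      case False
      then have x: "x = a" using xy by simp
      have "a < (1 - t) * a + t * y" using t xy x by (simp add: algebra_simps)
      then have "isCont f ((1 - t) * a + t * y)" using deriv DERIV_isCont by blast
      moreover have "(f \<longlongrightarrow> f a) (at_right a)"
        using cont by (auto simp: continuous_on_def intro: tendsto_within_subset)
      ultimately have "(g \<longlongrightarrow> g a) (at_right a)"
        unfolding g_def by (auto intro!: tendsto_intros isCont_tendsto_compose[where g=f])
      moreover have "eventually (\<lambda>z. g z \<le> 0) (at_right a)"
        using g_nonpos by (auto simp: eventually_at_right_field intro: exI[of _ "a + 1"])
      ultimately show ?thesis
        using x by (auto intro: tendsto_upperbound)
    qed (use g_nonpos in blast)
    then show "(1 - t) * f x + t * f y \<le> f ((1 - t) *\<^sub>R x + t *\<^sub>R y)"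
      by (simp add: g_def)
  qed (simp add: convex_real_interval)
qed

lemma concave_on_integral:
  fixes f :: "'b::real_vector \<Rightarrow> 'a \<Rightarrow> real"
  assumes conc: "\<And>\<omega>. concave_on S (\<lambda>x. f x \<omega>)"
    and int: "\<And>x. x \<in> S \<Longrightarrow> integrable M (f x)"
  shows "concave_on S (\<lambda>x. integral\<^sup>L M (f x))"
  unfolding concave_on_iff
proof (intro conjI ballI allI impI)
  show "convex S" using concave_on_imp_convex[OF conc] .
  fix x y :: 'b and u v :: real
  assume xy: "x \<in> S" "y \<in> S" and uv: "0 \<le> u" "0 \<le> v" "u + v = 1"
  have "u * integral\<^sup>L M (f x) + v * integral\<^sup>L M (f y) = (\<integral>\<omega>. u * f x \<omega> + v * f y \<omega> \<partial>M)"
    using int xy by simp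
  also have "\<dots> \<le> integral\<^sup>L M (f (u *\<^sub>R x + v *\<^sub>R y))"
    using xy uv conc[unfolded concave_on_iff] int convexD[OF concave_on_imp_convex[OF conc]]
    by (intro integral_mono) auto
  finally show "u * integral\<^sup>L M (f x) + v * integral\<^sup>L M (f y)
      \<le> integral\<^sup>L M (f (u *\<^sub>R x + v *\<^sub>R y))" .
qed

lemma has_real_derivative_integral:
  fixes f f' :: "real \<Rightarrow> 'a \<Rightarrow> real"
  assumes int: "\<And>x. integrable M (f x)"
    and deriv: "\<And>x \<omega>. ((\<lambda>x. f x \<omega>) has_real_derivative f' x \<omega>) (at x)"
    and bound: "\<And>x \<omega>. \<bar>f' x \<omega>\<bar> \<le> B \<omega>" and int_bound: "integrable M B"
    and meas: "f' x \<in> borel_measurable M"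
  shows "((\<lambda>x. integral\<^sup>L M (f x)) has_real_derivative integral\<^sup>L M (f' x)) (at x)"
  unfolding has_field_derivative_iff tendsto_at_iff_sequentially comp_def
proof (intro allI impI)
  fix X :: "nat \<Rightarrow> real"
  assume X: "\<forall>i. X i \<in> UNIV - {x}" "X \<longlonglongrightarrow> x"
  define q where "q i \<omega> = (f (X i) \<omega> - f x \<omega>) / (X i - x)" for i \<omega>
  have lim: "AE \<omega> in M. (\<lambda>i. q i \<omega>) \<longlonglongrightarrow> f' x \<omega>"
  proof (rule AE_I2)
    fix \<omega>
    have "((\<lambda>y. (f y \<omega> - f x \<omega>) / (y - x)) \<longlongrightarrow> f' x \<omega>) (at x)"
      using deriv[where x=x and \<omega>=\<omega>] by (simp add: has_field_derivative_iff)
    then show "(\<lambda>i. q i \<omega>) \<longlonglongrightarrow> f' x \<omega>"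
      unfolding tendsto_at_iff_sequentially using X by (auto simp: q_def comp_def)
  qed
  have dominated: "AE \<omega> in M. norm (q i \<omega>) \<le> B \<omega>" for i
  proof (rule AE_I2)
    fix \<omega>
    have "norm (f (X i) \<omega> - f x \<omega>) \<le> B \<omega> * norm (X i - x)"
      by (rule field_differentiable_bound[of UNIV]) (auto intro: deriv bound)
    then show "norm (q i \<omega>) \<le> B \<omega>"
      using X by (auto simp: q_def divide_le_eq)
  qed
  have "q i \<in> borel_measurable M" for i
    unfolding q_def using int[of "X i"] int[of x] by measurable
  then have "(\<lambda>i. integral\<^sup>L M (q i)) \<longlonglongrightarrow> integral\<^sup>L M (f' x)"
    using integral_dominated_convergence[OF meas _ int_bound lim dominated] by blast
  moreover have "integral\<^sup>L M (q i) = (integral\<^sup>L M (f (X i)) - integral\<^sup>L M (f x)) / (X i - x)" for i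
    unfolding q_def using int[of "X i"] int[of x] by simp
  ultimately show "(\<lambda>i. (integral\<^sup>L M (f (X i)) - integral\<^sup>L M (f x)) / (X i - x))
      \<longlonglongrightarrow> integral\<^sup>L M (f' x)"
    by simp
qed

text \<open>Telescoping over n equal steps bounds \<bar>D U - D 0\<bar> by U (f 0 - f U) / n.\<close>

lemma eq_if_increments_le_decrements:
  fixes D f :: "real \<Rightarrow> real"
  assumes incr: "\<And>u v. 0 \<le> u \<Longrightarrow> u \<le> v \<Longrightarrow> \<bar>D v - D u\<bar> \<le> (v - u) * (f u - f v)"
    and "0 \<le> U"
  shows "D U = D 0"
proof -
  have steps: "\<bar>D (real k * h) - D 0\<bar> \<le> h * (f 0 - f (real k * h))" if "0 \<le> h" for h and k :: nat
  proof (induction k)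
    case (Suc k)
    have "\<bar>D (real (Suc k) * h) - D 0\<bar>
        \<le> \<bar>D (real (Suc k) * h) - D (real k * h)\<bar> + \<bar>D (real k * h) - D 0\<bar>"
      by linarith
    also have "\<dots> \<le> h * (f (real k * h) - f (real (Suc k) * h)) + h * (f 0 - f (real k * h))"
      using incr[of "real k * h" "real (Suc k) * h"] Suc.IH that
      by (simp add: algebra_simps mult_left_mono)
    finally show ?case by (simp add: algebra_simps)
  qed simp
  have "eventually (\<lambda>n. \<bar>D U - D 0\<bar> \<le> U * (f 0 - f U) / real n) sequentially"
  proof (rule eventually_sequentiallyI[of 1])
    fix n :: nat assume "1 \<le> n"
    then show "\<bar>D U - D 0\<bar> \<le> U * (f 0 - f U) / real n"
      using steps[of "U / real n" n] \<open>0 \<le> U\<close> by (simp add: field_simps)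
  qed
  then have "\<bar>D U - D 0\<bar> \<le> 0"
    by (intro tendsto_lowerbound[OF lim_const_over_n]) auto
  then show ?thesis by simp
qed

lemma einterval_FTC_const_sign:
  fixes f F :: "real \<Rightarrow> real" and a b :: ereal
  assumes "a < b"
    and F: "\<And>x. a < ereal x \<Longrightarrow> ereal x < b \<Longrightarrow> (F has_real_derivative f x) (at x)"
    and f: "\<And>x. a < ereal x \<Longrightarrow> ereal x < b \<Longrightarrow> isCont f x"
    and sign: "(\<forall>x\<in>einterval a b. 0 \<le> f x) \<or> (\<forall>x\<in>einterval a b. f x \<le> 0)"
    and A: "((F \<circ> real_of_ereal) \<longlongrightarrow> A) (at_right a)"
    and B: "((F \<circ> real_of_ereal) \<longlongrightarrow> B) (at_left b)"
  shows "set_integrable lborel (einterval a b) f \<and> (LBINT x:einterval a b. f x) = B - A"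
proof -
  have FTC: "set_integrable lborel (einterval a b) g \<and> (LBINT x:einterval a b. g x) = GB - GA"
    if "\<And>x. a < ereal x \<Longrightarrow> ereal x < b \<Longrightarrow> (G has_real_derivative g x) (at x)"
      and "\<And>x. a < ereal x \<Longrightarrow> ereal x < b \<Longrightarrow> isCont g x"
      and "\<forall>x\<in>einterval a b. 0 \<le> g x"
      and "((G \<circ> real_of_ereal) \<longlongrightarrow> GA) (at_right a)" "((G \<circ> real_of_ereal) \<longlongrightarrow> GB) (at_left b)"
    for g G :: "real \<Rightarrow> real" and GA GB
    using interval_integral_FTC_nonneg[OF \<open>a < b\<close> that(1,2) _ that(4,5)] that(3)
      less_imp_le[OF \<open>a < b\<close>]
    by (auto simp: interval_lebesgue_integral_def einterval_iff)
  from sign show ?thesis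
  proof
    assume "\<forall>x\<in>einterval a b. f x \<le> 0"
    then have "set_integrable lborel (einterval a b) (\<lambda>x. - f x)
        \<and> (LBINT x:einterval a b. - f x) = - B - - A"
      using tendsto_minus[OF A] tendsto_minus[OF B]
      by (intro FTC) (auto intro!: derivative_eq_intros isCont_minus F f simp: comp_def)
    then show ?thesis
      by (auto simp: set_integral_uminus set_integrable_def)
  qed (use FTC[OF F f _ A B] in blast)
qed

lemma set_integral_Ioi_split:
  fixes f :: "real \<Rightarrow> real"
  assumes "a < b" and f1: "set_integrable lborel {a<..<b} f" and f2: "set_integrable lborel {b<..} f"
  shows "set_integrable lborel {a<..} f"
    and "(LBINT x:{a<..}. f x) = (LBINT x:{a<..<b}. f x) + (LBINT x:{b<..}. f x)"
proof -
  have eq: "indicator {a<..} x * f x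
      = indicator {a<..<b} x * f x + indicator {b<..} x * f x + f b * indicator {b} x" for x
    using \<open>a < b\<close> by (auto simp: indicator_def)
  have int: "integrable lborel (\<lambda>x. indicator {a<..<b} x * f x)"
    "integrable lborel (\<lambda>x. indicator {b<..} x * f x)"
    "integrable lborel (\<lambda>x. f b * indicator {b} x :: real)"
    using f1 f2 by (auto simp: set_integrable_def)
  then show "set_integrable lborel {a<..} f"
    unfolding set_integrable_def by (simp add: eq)
  show "(LBINT x:{a<..}. f x) = (LBINT x:{a<..<b}. f x) + (LBINT x:{b<..}. f x)"
    using int by (simp add: set_lebesgue_integral_def eq)
qed

lemma set_integral_indicator_lessThan:
  fixes p :: real
  assumes "0 \<le> p" "p \<le> 1"
  shows "set_integrable lborel {0<..<1} (indicator {..<p} :: real \<Rightarrow> real)"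
    and "(LBINT \<tau>:{0<..<1}. indicator {..<p} \<tau>) = p"
proof -
  have "(\<lambda>\<tau>. indicator {0<..<1} \<tau> *\<^sub>R indicator {..<p} \<tau>) = (indicator {0<..<p} :: real \<Rightarrow> real)"
    using assms by (auto simp: indicator_def fun_eq_iff)
  then show "set_integrable lborel {0<..<1} (indicator {..<p} :: real \<Rightarrow> real)"
    "(LBINT \<tau>:{0<..<1}. indicator {..<p} \<tau>) = p"
    using assms by (simp_all add: set_integrable_def set_lebesgue_integral_def)
qed

section \<open>Logarithms\<close>

text \<open>The real ln of Isabelle is even with ln 0 = 0, so ln u stands for ln \<bar>u\<bar> below, and
  u ln u and u^2 ln u are continuous on the whole line.\<close>

lemma ln_abs [simp]: "ln \<bar>u\<bar> = ln u" for u :: real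
  by (cases "u \<ge> 0") (simp_all add: ln_minus)

lemma has_real_derivative_ln:
  assumes "u \<noteq> 0"
  shows "(ln has_real_derivative 1 / u) (at u)"
proof -
  have "((\<lambda>v. ln (v\<^sup>2) / 2) has_real_derivative 1 / u) (at u)"
    using assms
    by (auto intro!: derivative_eq_intros
        simp: field_simps power2_eq_square zero_less_mult_iff linorder_neq_iff)
  then show ?thesis by (simp add: ln_realpow)
qed

lemmas has_real_derivative_ln_compose [derivative_intros] =
  has_real_derivative_ln[THEN DERIV_chain2]

definition xln :: "real \<Rightarrow> real" where
  "xln u = u * ln u"

definition x2ln :: "real \<Rightarrow> real" where
  "x2ln u = u\<^sup>2 * ln u"

lemma has_real_derivative_xln:
  assumes "u \<noteq> 0"
  shows "(xln has_real_derivative ln u + 1) (at u)"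
  unfolding xln_def[abs_def] using assms by (auto intro!: derivative_eq_intros)

lemmas has_real_derivative_xln_compose [derivative_intros] =
  has_real_derivative_xln[THEN DERIV_chain2]

lemma tendsto_xln_0: "(xln \<longlongrightarrow> 0) (at 0)"
proof -
  have "((\<lambda>u::real. u * ln (u\<^sup>2) / 2) \<longlongrightarrow> 0) (at 0)" by real_asymp
  then show ?thesis by (simp add: xln_def[abs_def] ln_realpow)
qed

lemma isCont_xln: "isCont xln u"
proof (cases "u = 0")
  case True
  then show ?thesis using tendsto_xln_0 by (simp add: isCont_def xln_def)
qed (use has_real_derivative_xln DERIV_isCont in blast)

lemma continuous_on_xln [continuous_intros]:
  "continuous_on S f \<Longrightarrow> continuous_on S (\<lambda>x. xln (f x))"
  by (rule continuous_on_compose2[OF continuous_at_imp_continuous_on[OF ballI[OF isCont_xln]]]) auto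

lemma has_real_derivative_x2ln: "(x2ln has_real_derivative 2 * xln u + u) (at u)"
proof (cases "u = 0")
  case True
  have "((\<lambda>h. (x2ln h - x2ln 0) / (h - 0)) \<longlongrightarrow> 0) (at 0)"
    by (rule Lim_transform_eventually[OF tendsto_xln_0])
       (simp add: eventually_at_filter x2ln_def xln_def power2_eq_square)
  then show ?thesis by (simp add: True has_field_derivative_iff xln_def)
next
  case False
  then show ?thesis unfolding x2ln_def[abs_def]
    by (auto intro!: derivative_eq_intros simp: xln_def power2_eq_square algebra_simps)
qed

lemmas has_real_derivative_x2ln_compose [derivative_intros] =
  has_real_derivative_x2ln[THEN DERIV_chain2]

lemma continuous_on_x2ln [continuous_intros]:
  "continuous_on S f \<Longrightarrow> continuous_on S (\<lambda>x. x2ln (f x))"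
  by (rule continuous_on_compose2[of UNIV x2ln])
     (auto intro: continuous_at_imp_continuous_on DERIV_isCont has_real_derivative_x2ln)

lemma artanh_ge_self:
  fixes w :: real
  assumes "0 \<le> w" "w < 1"
  shows "w \<le> artanh w"
proof -
  have "artanh 0 - 0 \<le> artanh w - w"
  proof (rule DERIV_nonneg_imp_nondecreasing[OF assms(1)])
    fix v assume v: "0 \<le> v" "v \<le> w"
    then have "\<bar>v\<bar> < 1" "v\<^sup>2 < 1" using assms by (simp_all add: abs_square_less_1)
    then have "((\<lambda>v. artanh v - v) has_real_derivative v\<^sup>2 / (1 - v\<^sup>2)) (at v)"
      "0 \<le> v\<^sup>2 / (1 - v\<^sup>2)"
      by (auto intro!: derivative_eq_intros simp: divide_simps)
    then show "\<exists>y. ((\<lambda>v. artanh v - v) has_real_derivative y) (at v) \<and> 0 \<le> y"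
      by blast
  qed
  then show ?thesis by simp
qed

lemma one_minus_square_mult_artanh_le:
  fixes w :: real
  assumes "0 \<le> w" "w < 1"
  shows "(1 - w\<^sup>2) * artanh w \<le> w"
proof -
  have "0 - (1 - 0\<^sup>2) * artanh 0 \<le> w - (1 - w\<^sup>2) * artanh w"
  proof (rule DERIV_nonneg_imp_nondecreasing[OF assms(1)])
    fix v assume v: "0 \<le> v" "v \<le> w"
    then have "\<bar>v\<bar> < 1" "v\<^sup>2 < 1" using assms by (simp_all add: abs_square_less_1)
    then have "((\<lambda>v. v - (1 - v\<^sup>2) * artanh v) has_real_derivative 2 * v * artanh v) (at v)"
      by (auto intro!: derivative_eq_intros simp: divide_simps)
    moreover have "0 \<le> 2 * v * artanh v"
      using v artanh_ge_self[of v] assms by simp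
    ultimately show "\<exists>y. ((\<lambda>v. v - (1 - v\<^sup>2) * artanh v) has_real_derivative y) (at v) \<and> 0 \<le> y"
      by blast
  qed
  then show ?thesis by simp
qed

lemma ln_ratio_bounds:
  fixes m M :: real
  assumes "0 \<le> m" "m < M"
  shows "2 * m / M \<le> ln (M + m) - ln (M - m)"
    and "(M\<^sup>2 - m\<^sup>2) * (ln (M + m) - ln (M - m)) \<le> 2 * m * M"
proof -
  have M: "0 < M" using assms by simp
  define w where "w = m / M"
  have w: "0 \<le> w" "w < 1" using assms by (auto simp: w_def field_simps)
  have "M + m = M * (1 + w)" "M - m = M * (1 - w)" using M by (auto simp: w_def field_simps)
  then have L: "ln (M + m) - ln (M - m) = 2 * artanh w"
    using M w by (simp add: artanh_def ln_mult ln_div)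
  show "2 * m / M \<le> ln (M + m) - ln (M - m)"
    using artanh_ge_self[OF w] by (simp add: L w_def)
  have "M\<^sup>2 - m\<^sup>2 = M\<^sup>2 * (1 - w\<^sup>2)" using M by (simp add: w_def field_simps)
  then have "(M\<^sup>2 - m\<^sup>2) * (ln (M + m) - ln (M - m)) = 2 * M\<^sup>2 * ((1 - w\<^sup>2) * artanh w)"
    by (simp add: L)
  also have "\<dots> \<le> 2 * M\<^sup>2 * w"
    using one_minus_square_mult_artanh_le[OF w] by (intro mult_left_mono) auto
  finally show "(M\<^sup>2 - m\<^sup>2) * (ln (M + m) - ln (M - m)) \<le> 2 * m * M"
    using M by (simp add: w_def power2_eq_square mult_ac)
qed

section \<open>The logarithmic kernel\<close>

definition log_kernel :: "real \<Rightarrow> real \<Rightarrow> real" where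
  "log_kernel x y = ln \<bar>(x\<^sup>2 - y\<^sup>2) / y\<^sup>2\<bar>"

lemma T_eq_log_kernel_integral: "T \<omega> x = 1 / pi * (LBINT y:{0<..}. log_kernel x y * \<omega> y)"
  by (simp add: T_def log_kernel_def)

lemma log_kernel_eq:
  assumes "y \<noteq> 0" "y \<noteq> x" "y \<noteq> -x"
  shows "log_kernel x y = ln (y - x) + ln (y + x) - 2 * ln y"
proof -
  have "(x\<^sup>2 - y\<^sup>2) / y\<^sup>2 = ((x - y) * (x + y)) / y ^ 2"
    by (simp add: power2_eq_square algebra_simps)
  then show ?thesis
    using assms
    by (simp add: log_kernel_def ln_div ln_mult ln_realpow ln_minus[of "y - x", symmetric] add.commute)
qed

lemma log_kernel_abs [simp]: "log_kernel \<bar>x\<bar> = log_kernel x"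
  by (simp add: log_kernel_def fun_eq_iff)

lemma log_kernel_0 [simp]: "log_kernel 0 = (\<lambda>y. 0)"
  by (simp add: log_kernel_def fun_eq_iff)

lemma log_kernel_at_0 [simp]: "log_kernel x 0 = 0"
  by (simp add: log_kernel_def)

lemma isCont_log_kernel:
  assumes "y \<noteq> 0" "y \<noteq> x" "y \<noteq> -x"
  shows "isCont (log_kernel x) y"
  unfolding log_kernel_def using assms by (auto intro!: continuous_intros simp: power2_eq_iff)

lemma borel_measurable_log_kernel [measurable]: "log_kernel x \<in> borel_measurable borel"
  unfolding log_kernel_def by measurable

definition log_kernel_primitive :: "real \<Rightarrow> real \<Rightarrow> real" where
  "log_kernel_primitive x y = xln (y - x) + xln (y + x) - 2 * xln y"

lemma log_kernel_primitive_has_real_derivative: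
  assumes "y \<noteq> 0" "y \<noteq> x" "y \<noteq> -x"
  shows "(log_kernel_primitive x has_real_derivative log_kernel x y) (at y)"
  unfolding log_kernel_primitive_def[abs_def] log_kernel_eq[OF assms] using assms
  by (auto intro!: derivative_eq_intros)

lemma isCont_log_kernel_primitive: "isCont (log_kernel_primitive x) y"
  unfolding log_kernel_primitive_def[abs_def]
  by (intro continuous_at_imp_continuous_on continuous_on_interior[of UNIV] continuous_intros) auto

lemma log_kernel_nonneg:
  assumes "0 < y" "y \<le> \<bar>x\<bar> / sqrt 2"
  shows "0 \<le> log_kernel x y"
proof -
  have "y\<^sup>2 \<le> (\<bar>x\<bar> / sqrt 2)\<^sup>2" using assms by (intro power_mono) auto
  then show ?thesis
    using assms unfolding log_kernel_def by (intro ln_ge_zero) (simp add: field_simps power_divide)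
qed

lemma log_kernel_nonpos:
  assumes "0 < y" "\<bar>x\<bar> / sqrt 2 \<le> y"
  shows "log_kernel x y \<le> 0"
proof (cases "x\<^sup>2 = y\<^sup>2")
  case False
  have "(\<bar>x\<bar> / sqrt 2)\<^sup>2 \<le> y\<^sup>2" using assms by (intro power_mono) auto
  then show ?thesis
    using assms False unfolding log_kernel_def
    by (subst ln_le_zero_iff) (auto simp: field_simps power_divide abs_le_iff)
qed (simp add: log_kernel_def)

lemma log_kernel_primitive_0 [simp]: "log_kernel_primitive x 0 = 0"
  by (simp add: log_kernel_primitive_def xln_def ln_minus)

lemma log_kernel_primitive_at_top: "(log_kernel_primitive x \<longlongrightarrow> 0) at_top"
proof -
  have "((\<lambda>y. (y - x) * ln (y - x) + (y + x) * ln (y + x) - 2 * (y * ln y)) \<longlongrightarrow> 0) at_top"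
    by real_asymp
  then show ?thesis
    by (simp add: log_kernel_primitive_def[abs_def] xln_def)
qed

text \<open>The kernel is non-negative below a / sqrt 2 and non-positive above, so the fundamental
  theorem of calculus for integrands of constant sign applies on (0, a / sqrt 2), (a / sqrt 2, a)
  and (a, \<infinity>).\<close>

lemma log_kernel_integral_pos:
  assumes "0 < a"
  shows "set_integrable lborel {0<..} (log_kernel a) \<and> (LBINT y:{0<..}. log_kernel a y) = 0"
proof -
  define c where "c = a / sqrt 2"
  define F where "F = log_kernel_primitive a"
  have c: "0 < c" "c < a" using assms by (auto simp: c_def field_simps)
  have F: "(F has_real_derivative log_kernel a y) (at y)" "isCont (log_kernel a) y"
    if "0 < y" "y \<noteq> a" for y
    using that assms log_kernel_primitive_has_real_derivative[of y a] isCont_log_kernel[of y a]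
    by (auto simp: F_def)
  have lim: "(F \<longlongrightarrow> F y) (at_left y)" "(F \<longlongrightarrow> F y) (at_right y)" for y
    using isCont_log_kernel_primitive[where x=a and y=y]
    by (auto simp: F_def isCont_def filterlim_at_split)
  have "\<forall>y\<in>{0<..<c}. 0 \<le> log_kernel a y"
    using assms by (auto intro!: log_kernel_nonneg simp: c_def)
  then have p1: "set_integrable lborel {0<..<c} (log_kernel a)"
    "(LBINT y:{0<..<c}. log_kernel a y) = F c - F 0"
    using einterval_FTC_const_sign[of "ereal 0" c F "log_kernel a" "F 0" "F c"] c F lim
    by (auto simp: ereal_tendsto_simps)
  have nonpos: "log_kernel a y \<le> 0" if "c < y" for y
  proof -
    have "0 < y" "a / sqrt 2 \<le> y" using that c by (auto simp: c_def)
    with assms show ?thesis by (intro log_kernel_nonpos) auto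
  qed
  then have "\<forall>y\<in>{c<..<a}. log_kernel a y \<le> 0" by auto
  then have p2: "set_integrable lborel {c<..<a} (log_kernel a)"
    "(LBINT y:{c<..<a}. log_kernel a y) = F a - F c"
    using einterval_FTC_const_sign[of c a F "log_kernel a" "F c" "F a"] c F lim
    by (auto simp: ereal_tendsto_simps)
  have "\<forall>y\<in>{a<..}. log_kernel a y \<le> 0" using nonpos c by auto
  then have p3: "set_integrable lborel {a<..} (log_kernel a)" "(LBINT y:{a<..}. log_kernel a y) = 0 - F a"
    using einterval_FTC_const_sign[of a \<infinity> F "log_kernel a" "F a" 0] c F lim
      log_kernel_primitive_at_top[of a]
    by (auto simp: ereal_tendsto_simps F_def)
  have "set_integrable lborel {c<..} (log_kernel a)" "(LBINT y:{c<..}. log_kernel a y) = - F c"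
    using set_integral_Ioi_split[of c a "log_kernel a"] p2 p3 c by auto
  then show ?thesis
    using set_integral_Ioi_split[of 0 c "log_kernel a"] p1 c by (auto simp: F_def)
qed

lemma log_kernel_integral:
  shows "set_integrable lborel {0<..} (log_kernel x)" and "(LBINT y:{0<..}. log_kernel x y) = 0"
  using log_kernel_integral_pos[of "\<bar>x\<bar>"] by (cases "x = 0"; simp add: set_integrable_def)+

section \<open>The transform of a truncated parabola\<close>

definition parabola_primitive :: "real \<Rightarrow> real \<Rightarrow> real \<Rightarrow> real" where
  "parabola_primitive x s y =
     (s\<^sup>2 - (y\<^sup>2 - x * y + x\<^sup>2) / 3) * xln (y + x) + (s\<^sup>2 - (y\<^sup>2 + x * y + x\<^sup>2) / 3) * xln (y - x)
     - 2 * (s\<^sup>2 - y\<^sup>2 / 3) * xln y + 2 / 3 * x\<^sup>2 * y"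

definition parabola_transform :: "real \<Rightarrow> real \<Rightarrow> real" where
  "parabola_transform x s =
     ((2 * s - x) * x2ln (s + x) + (2 * s + x) * x2ln (s - x) - 4 * s * x2ln s + 2 * x\<^sup>2 * s) / 3"

lemma parabola_primitive_has_real_derivative:
  assumes "y \<noteq> 0" "y \<noteq> x" "y \<noteq> -x"
  shows "(parabola_primitive x s has_real_derivative log_kernel x y * (s\<^sup>2 - y\<^sup>2)) (at y)"
proof -
  have "y + x \<noteq> 0" "y - x \<noteq> 0" using assms by auto
  then have xln: "((\<lambda>y. xln (y + x)) has_real_derivative ln (y + x) + 1) (at y)"
      "((\<lambda>y. xln (y - x)) has_real_derivative ln (y - x) + 1) (at y)"
      "(xln has_real_derivative ln y + 1) (at y)"
    using assms has_real_derivative_xln by (auto intro!: derivative_eq_intros)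
  have poly: "((\<lambda>y. s\<^sup>2 - (y\<^sup>2 - x * y + x\<^sup>2) / 3) has_real_derivative - (2 * y - x) / 3) (at y)"
      "((\<lambda>y. s\<^sup>2 - (y\<^sup>2 + x * y + x\<^sup>2) / 3) has_real_derivative - (2 * y + x) / 3) (at y)"
      "((\<lambda>y. 2 * (s\<^sup>2 - y\<^sup>2 / 3)) has_real_derivative - 4 * y / 3) (at y)"
      "((\<lambda>y. 2 / 3 * x\<^sup>2 * y) has_real_derivative 2 / 3 * x\<^sup>2) (at y)"
    by (auto intro!: derivative_eq_intros simp: field_simps)
  have "(parabola_primitive x s has_real_derivative
        (- (2 * y - x) / 3 * xln (y + x) + (ln (y + x) + 1) * (s\<^sup>2 - (y\<^sup>2 - x * y + x\<^sup>2) / 3))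
      + (- (2 * y + x) / 3 * xln (y - x) + (ln (y - x) + 1) * (s\<^sup>2 - (y\<^sup>2 + x * y + x\<^sup>2) / 3))
      - (- 4 * y / 3 * xln y + (ln y + 1) * (2 * (s\<^sup>2 - y\<^sup>2 / 3))) + 2 / 3 * x\<^sup>2) (at y)"
    unfolding parabola_primitive_def[abs_def] by (intro DERIV_add DERIV_diff DERIV_mult xln poly)
  moreover have "(- (2 * y - x) / 3 * xln (y + x) + (ln (y + x) + 1) * (s\<^sup>2 - (y\<^sup>2 - x * y + x\<^sup>2) / 3))
      + (- (2 * y + x) / 3 * xln (y - x) + (ln (y - x) + 1) * (s\<^sup>2 - (y\<^sup>2 + x * y + x\<^sup>2) / 3))
      - (- 4 * y / 3 * xln y + (ln y + 1) * (2 * (s\<^sup>2 - y\<^sup>2 / 3))) + 2 / 3 * x\<^sup>2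
      = log_kernel x y * (s\<^sup>2 - y\<^sup>2)"
    unfolding log_kernel_eq[OF assms] xln_def by (simp add: field_simps power2_eq_square)
  ultimately show ?thesis by simp
qed

lemma parabola_primitive_0 [simp]: "parabola_primitive x s 0 = 0"
  by (simp add: parabola_primitive_def xln_def ln_minus)

lemma parabola_primitive_diag: "parabola_primitive x s s = parabola_transform x s"
  by (simp add: parabola_primitive_def parabola_transform_def xln_def x2ln_def
      field_simps power2_eq_square add.commute)

lemma continuous_on_parabola_primitive: "continuous_on S (parabola_primitive x s)"
  unfolding parabola_primitive_def by (intro continuous_intros) auto

lemma set_integrable_log_kernel_parabola:
  assumes "0 \<le> s"
  shows "set_integrable lborel {0..s} (\<lambda>y. log_kernel x y * (s\<^sup>2 - y\<^sup>2))"
proof -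
  have K: "integrable lborel (\<lambda>y. s\<^sup>2 * (indicator {0<..} y * log_kernel x y))"
    using log_kernel_integral(1)[of x] by (simp add: set_integrable_def)
  have "integrable lborel (\<lambda>y. indicator {0..s} y * (log_kernel x y * (s\<^sup>2 - y\<^sup>2)))"
  proof (rule Bochner_Integration.integrable_bound[OF K _ AE_I2])
    fix y
    show "norm (indicator {0..s} y * (log_kernel x y * (s\<^sup>2 - y\<^sup>2)))
        \<le> norm (s\<^sup>2 * (indicator {0<..} y * log_kernel x y))"
    proof (cases "0 < y \<and> y \<le> s")
      case True
      then have "\<bar>s\<^sup>2 - y\<^sup>2\<bar> \<le> s\<^sup>2" using power_mono[of y s 2] by auto
      then show ?thesis
        using True by (auto simp: abs_mult mult.commute intro: mult_left_mono)
    qed (cases "y = 0", auto simp: indicator_def)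
  qed measurable
  then show ?thesis
    by (simp add: set_integrable_def)
qed

lemma log_kernel_parabola_integral:
  assumes "0 \<le> s"
  shows "(LBINT y:{0..s}. log_kernel x y * (s\<^sup>2 - y\<^sup>2)) = parabola_transform x s"
proof -
  have "((\<lambda>y. log_kernel x y * (s\<^sup>2 - y\<^sup>2)) has_integral
      parabola_primitive x s s - parabola_primitive x s 0) {0..s}"
    using assms
    by (intro fundamental_theorem_of_calculus_interior_strong[where S="{x, -x}"])
       (auto intro!: continuous_on_parabola_primitive parabola_primitive_has_real_derivative
         simp: has_real_derivative_iff_has_vector_derivative[symmetric])
  then show ?thesis
    using set_borel_integral_eq_integral(2)[OF set_integrable_log_kernel_parabola[OF assms]]
    by (simp add: parabola_primitive_diag integral_unique)
qed

lemma log_kernel_truncated_parabola_integral: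
  assumes "0 \<le> s"
  shows "set_integrable lborel {0<..} (\<lambda>y. log_kernel x y * (1 - min (y\<^sup>2) (s\<^sup>2)))"
    and "(LBINT y:{0<..}. log_kernel x y * (1 - min (y\<^sup>2) (s\<^sup>2))) = parabola_transform x s"
proof -
  have split: "indicator {0<..} y * (log_kernel x y * (1 - min (y\<^sup>2) (s\<^sup>2)))
      = (1 - s\<^sup>2) * (indicator {0<..} y * log_kernel x y)
        + indicator {0..s} y * (log_kernel x y * (s\<^sup>2 - y\<^sup>2))" for y
  proof -
    have "y\<^sup>2 \<le> s\<^sup>2 \<longleftrightarrow> y \<le> s" if "0 \<le> y" using that assms by (simp add: power_mono_iff)
    then show ?thesis
      by (cases "y = 0") (auto simp: indicator_def min_def algebra_simps log_kernel_def)
  qed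
  have int: "integrable lborel (\<lambda>y. indicator {0<..} y * log_kernel x y)"
    "integrable lborel (\<lambda>y. indicator {0..s} y * (log_kernel x y * (s\<^sup>2 - y\<^sup>2)))"
    using log_kernel_integral(1) set_integrable_log_kernel_parabola[OF assms]
    by (auto simp: set_integrable_def)
  then show "set_integrable lborel {0<..} (\<lambda>y. log_kernel x y * (1 - min (y\<^sup>2) (s\<^sup>2)))"
    by (simp add: set_integrable_def split)
  show "(LBINT y:{0<..}. log_kernel x y * (1 - min (y\<^sup>2) (s\<^sup>2))) = parabola_transform x s"
    using int log_kernel_integral(2)[of x] log_kernel_parabola_integral[OF assms, of x]
    by (simp add: set_lebesgue_integral_def split)
qed

definition parabola_transform_deriv :: "real \<Rightarrow> real \<Rightarrow> real" where
  "parabola_transform_deriv x s = (s - x) * xln (s + x) - (s + x) * xln (s - x) + 2 * s * x"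

lemma parabola_transform_deriv_eq:
  "parabola_transform_deriv x s = (s\<^sup>2 - x\<^sup>2) * (ln (s + x) - ln (s - x)) + 2 * s * x"
  by (simp add: parabola_transform_deriv_def xln_def algebra_simps power2_eq_square)

lemma has_real_derivative_parabola_transform:
  "((\<lambda>x. parabola_transform x s) has_real_derivative parabola_transform_deriv x s) (at x)"
proof -
  have x2ln: "((\<lambda>x. x2ln (s + x)) has_real_derivative 2 * xln (s + x) + (s + x)) (at x)"
      "((\<lambda>x. x2ln (s - x)) has_real_derivative - (2 * xln (s - x) + (s - x))) (at x)"
    by (auto intro!: derivative_eq_intros)
  have poly: "((\<lambda>x. 2 * s - x) has_real_derivative - 1) (at x)"
      "((\<lambda>x. 2 * s + x) has_real_derivative 1) (at x)"
      "((\<lambda>x. 2 * x\<^sup>2 * s) has_real_derivative 4 * x * s) (at x)"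
    by (auto intro!: derivative_eq_intros)
  have "((\<lambda>x. parabola_transform x s) has_real_derivative
      ((- 1 * x2ln (s + x) + (2 * xln (s + x) + (s + x)) * (2 * s - x))
       + (1 * x2ln (s - x) + - (2 * xln (s - x) + (s - x)) * (2 * s + x)) - 0 + 4 * x * s) / 3) (at x)"
    unfolding parabola_transform_def[abs_def]
    by (intro DERIV_cdivide DERIV_add DERIV_diff DERIV_mult DERIV_const x2ln poly)
  moreover have "((- 1 * x2ln (s + x) + (2 * xln (s + x) + (s + x)) * (2 * s - x))
       + (1 * x2ln (s - x) + - (2 * xln (s - x) + (s - x)) * (2 * s + x)) - 0 + 4 * x * s) / 3
      = parabola_transform_deriv x s"
    by (simp add: parabola_transform_deriv_def x2ln_def xln_def field_simps power2_eq_square)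
  ultimately show ?thesis by simp
qed

lemma continuous_on_parabola_transform_deriv [continuous_intros]:
  "continuous_on S f \<Longrightarrow> continuous_on S g \<Longrightarrow>
   continuous_on S (\<lambda>z. parabola_transform_deriv (f z) (g z))"
  unfolding parabola_transform_deriv_def by (intro continuous_intros)

lemma parabola_transform_0 [simp]: "parabola_transform 0 s = 0"
  by (simp add: parabola_transform_def x2ln_def)

lemma parabola_transform_deriv_minus: "parabola_transform_deriv (- x) s = - parabola_transform_deriv x s"
  by (simp add: parabola_transform_deriv_def algebra_simps)

lemma parabola_transform_deriv_bounds:
  assumes "0 \<le> x" "0 \<le> s"
  shows "0 \<le> parabola_transform_deriv x s \<and> parabola_transform_deriv x s \<le> 4 * s\<^sup>2"
proof -
  define L where "L = ln (s + x) - ln (s - x)"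
  have D: "parabola_transform_deriv x s = (s\<^sup>2 - x\<^sup>2) * L + 2 * s * x"
    by (simp add: parabola_transform_deriv_eq L_def)
  consider "x < s" | "x = s" | "s < x" by linarith
  then show ?thesis
  proof cases
    case 1
    note bounds = ln_ratio_bounds[OF assms(1) 1, folded L_def]
    have "0 \<le> 2 * x / s" using assms by simp
    then have "0 \<le> L" using bounds(1) by linarith
    then have "0 \<le> (s\<^sup>2 - x\<^sup>2) * L"
      using 1 assms by (intro mult_nonneg_nonneg) (auto simp: power_mono)
    moreover have "x * s \<le> s * s" using 1 assms by (intro mult_right_mono) auto
    ultimately show ?thesis
      using bounds(2) assms unfolding D by (simp add: power2_eq_square mult_ac)
  next
    case 3
    have "L = ln (x + s) - ln (x - s)"
      by (simp add: L_def add.commute ln_minus[of "x - s", symmetric])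
    note bounds = ln_ratio_bounds[OF assms(2) 3, folded this]
    have x: "0 < x" using 3 assms by simp
    have "(x\<^sup>2 - s\<^sup>2) * (2 * s / x) \<le> (x\<^sup>2 - s\<^sup>2) * L"
      using bounds(1) 3 assms by (intro mult_left_mono) (auto simp: power_mono)
    moreover have "2 * s * x - (x\<^sup>2 - s\<^sup>2) * (2 * s / x) = 2 * s * (s / x) * s"
      using x by (simp add: field_simps power2_eq_square)
    moreover have "2 * s * (s / x) * s \<le> 2 * s * 1 * s"
      using 3 assms x by (intro mult_left_mono mult_right_mono) auto
    ultimately show ?thesis
      using bounds(2) assms unfolding D by (simp add: algebra_simps power2_eq_square)
  qed (use assms in \<open>simp add: parabola_transform_deriv_eq power2_eq_square\<close>)
qed

lemma abs_parabola_transform_deriv_le: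
  assumes "0 \<le> s"
  shows "\<bar>parabola_transform_deriv x s\<bar> \<le> 4 * s\<^sup>2"
  using parabola_transform_deriv_bounds[OF _ assms, of "\<bar>x\<bar>"]
  by (cases "0 \<le> x") (auto simp: parabola_transform_deriv_minus)

lemma abs_parabola_transform_le:
  assumes "0 \<le> s"
  shows "\<bar>parabola_transform x s\<bar> \<le> 4 * s\<^sup>2 * \<bar>x\<bar>"
  using field_differentiable_bound[of UNIV "\<lambda>x. parabola_transform x s" "\<lambda>x. parabola_transform_deriv x s"
      "4 * s\<^sup>2" x 0]
  by (auto simp: has_real_derivative_parabola_transform abs_parabola_transform_deriv_le[OF assms])

lemma parabola_slope_has_real_derivative:
  assumes "0 < x" "x \<noteq> s" "0 < s"
  shows "((\<lambda>x. parabola_transform_deriv x s / (2 * x)) has_real_derivative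
      (2 * s * x - (s\<^sup>2 + x\<^sup>2) * (ln (s + x) - ln (s - x))) / (2 * x\<^sup>2)) (at x)"
proof -
  define L where "L x = ln (s + x) - ln (s - x)" for x
  have ne: "s + x \<noteq> 0" "s - x \<noteq> 0" "s\<^sup>2 - x\<^sup>2 \<noteq> 0"
    using assms by (auto simp: power2_eq_iff)
  have "(L has_real_derivative 2 * s / (s\<^sup>2 - x\<^sup>2)) (at x)"
    unfolding L_def[abs_def] using ne
    by (auto intro!: derivative_eq_intros simp: field_simps power2_eq_square)
  then have "((\<lambda>x. (s\<^sup>2 - x\<^sup>2) * L x + 2 * s * x) has_real_derivative 4 * s - 2 * x * L x) (at x)"
    using ne by (auto intro!: derivative_eq_intros simp: divide_simps)
  moreover have "((\<lambda>x. 2 * x) has_real_derivative 2) (at x)"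
    by (auto intro!: derivative_eq_intros)
  ultimately have "((\<lambda>x. ((s\<^sup>2 - x\<^sup>2) * L x + 2 * s * x) / (2 * x)) has_real_derivative
      ((4 * s - 2 * x * L x) * (2 * x) - ((s\<^sup>2 - x\<^sup>2) * L x + 2 * s * x) * 2) / (2 * x * (2 * x))) (at x)"
    using assms by (intro DERIV_divide) auto
  moreover have "((4 * s - 2 * x * L x) * (2 * x) - ((s\<^sup>2 - x\<^sup>2) * L x + 2 * s * x) * 2) / (2 * x * (2 * x))
      = (2 * s * x - (s\<^sup>2 + x\<^sup>2) * L x) / (2 * x\<^sup>2)"
    using assms by (simp add: field_simps power2_eq_square)
  ultimately show ?thesis
    by (simp add: parabola_transform_deriv_eq L_def)
qed

lemma parabola_slope_deriv_nonpos:
  fixes x s :: real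
  assumes "0 < x" "x \<noteq> s" "0 < s"
  shows "(2 * s * x - (s\<^sup>2 + x\<^sup>2) * (ln (s + x) - ln (s - x))) / (2 * x\<^sup>2) \<le> 0"
proof -
  obtain m M where mM: "0 \<le> m" "m < M" "m * M = s * x" "M\<^sup>2 \<le> s\<^sup>2 + x\<^sup>2"
    and L: "ln (s + x) - ln (s - x) = ln (M + m) - ln (M - m)"
  proof (cases "x < s")
    case True
    then show ?thesis using assms by (intro that[of x s]) (auto simp: mult.commute)
  next
    case False
    then show ?thesis using assms
      by (intro that[of s x]) (auto simp: add.commute ln_minus[of "x - s", symmetric])
  qed
  then have "2 * m / M \<le> ln (s + x) - ln (s - x)"
    using ln_ratio_bounds(1)[OF mM(1,2)] by simp
  then have "(s\<^sup>2 + x\<^sup>2) * (2 * m / M) \<le> (s\<^sup>2 + x\<^sup>2) * (ln (s + x) - ln (s - x))"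
    by (intro mult_left_mono) auto
  moreover have "2 * s * x \<le> (s\<^sup>2 + x\<^sup>2) * (2 * m / M)"
  proof -
    have "2 * s * x = M\<^sup>2 * (2 * m / M)" using mM by (simp add: field_simps power2_eq_square)
    also have "\<dots> \<le> (s\<^sup>2 + x\<^sup>2) * (2 * m / M)" using mM by (intro mult_right_mono) auto
    finally show ?thesis .
  qed
  ultimately have "2 * s * x - (s\<^sup>2 + x\<^sup>2) * (ln (s + x) - ln (s - x)) \<le> 0"
    by linarith
  then show ?thesis by (rule divide_nonpos_nonneg) simp
qed

lemma parabola_slope_antimono:
  assumes "0 < x" "x \<le> y" "0 \<le> s"
  shows "parabola_transform_deriv y s / (2 * y) \<le> parabola_transform_deriv x s / (2 * x)"
proof (cases "s = 0")
  case True
  then show ?thesis by (simp add: parabola_transform_deriv_eq ln_minus)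
next
  case False
  then have s: "0 < s" using assms by simp
  have piece: "parabola_transform_deriv v s / (2 * v) \<le> parabola_transform_deriv u s / (2 * u)"
    if uv: "0 < u" "u \<le> v" "s \<le> u \<or> v \<le> s" for u v
  proof (rule DERIV_nonpos_imp_decreasing_open[OF uv(2)])
    fix z assume "u < z" "z < v"
    then have "0 < z" "z \<noteq> s" using uv by auto
    with s show "\<exists>y. ((\<lambda>x. parabola_transform_deriv x s / (2 * x)) has_real_derivative y) (at z)
        \<and> y \<le> 0"
      by (blast intro: parabola_slope_has_real_derivative parabola_slope_deriv_nonpos)
  next
    show "continuous_on {u..v} (\<lambda>x. parabola_transform_deriv x s / (2 * x))"
      using uv by (intro continuous_intros) auto
  qed
  show ?thesis
  proof (cases "s \<le> x \<or> y \<le> s")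
    case True
    then show ?thesis using assms by (intro piece) auto
  next
    case False
    then have "parabola_transform_deriv s s / (2 * s) \<le> parabola_transform_deriv x s / (2 * x)"
      "parabola_transform_deriv y s / (2 * y) \<le> parabola_transform_deriv s s / (2 * s)"
      using assms by (auto intro!: piece)
    then show ?thesis by linarith
  qed
qed

lemma concave_on_parabola_transform_sqrt:
  assumes "0 \<le> s"
  shows "concave_on {0..} (\<lambda>\<sigma>. parabola_transform (sqrt \<sigma>) s)"
proof (rule concave_on_atLeast_if_deriv_antimono)
  show "continuous_on {0..} (\<lambda>\<sigma>. parabola_transform (sqrt \<sigma>) s)"
    unfolding parabola_transform_def by (intro continuous_intros) auto
  fix \<sigma> :: real assume "0 < \<sigma>"
  have eq: "d * (inverse r / 2) = d / (2 * r)" for d r :: real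
    by (simp add: field_simps)
  from \<open>0 < \<sigma>\<close> have "((\<lambda>\<sigma>. parabola_transform (sqrt \<sigma>) s) has_real_derivative
      parabola_transform_deriv (sqrt \<sigma>) s * (inverse (sqrt \<sigma>) / 2)) (at \<sigma>)"
    by (rule DERIV_chain2[OF has_real_derivative_parabola_transform DERIV_real_sqrt])
  then show "((\<lambda>\<sigma>. parabola_transform (sqrt \<sigma>) s) has_real_derivative
      parabola_transform_deriv (sqrt \<sigma>) s / (2 * sqrt \<sigma>)) (at \<sigma>)"
    unfolding eq .
next
  fix \<sigma> \<tau> :: real assume "0 < \<sigma>" "\<sigma> \<le> \<tau>"
  then show "parabola_transform_deriv (sqrt \<tau>) s / (2 * sqrt \<tau>)
      \<le> parabola_transform_deriv (sqrt \<sigma>) s / (2 * sqrt \<sigma>)"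
    using assms by (intro parabola_slope_antimono) auto
qed

section \<open>Layer-cake representation of convex profiles\<close>

definition convex_profile :: "(real \<Rightarrow> real) \<Rightarrow> bool" where
  "convex_profile g \<longleftrightarrow> convex_on {0..} g \<and> (\<forall>u v. 0 \<le> u \<longrightarrow> u \<le> v \<longrightarrow> g v \<le> g u)
     \<and> g 0 = 1 \<and> (\<forall>u\<ge>0. max 0 (1 - u) \<le> g u)"

text \<open>For convex g the difference quotients increase as h decreases, so descent_rate g u is the
  right derivative -g'(u+).\<close>

definition descent_rate :: "(real \<Rightarrow> real) \<Rightarrow> real \<Rightarrow> real" where
  "descent_rate g u = (SUP h\<in>{0<..}. (g u - g (u + h)) / h)"

text \<open>The generalised inverse of the non-increasing function descent_rate g; only
  \<tau> \<in> (0, 1) matters, and the value 0 for \<tau> \<le> 0 is a placeholder.\<close>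

definition descent_inverse :: "(real \<Rightarrow> real) \<Rightarrow> real \<Rightarrow> real" where
  "descent_inverse g \<tau> = (if \<tau> \<le> 0 then 0 else Sup (insert 0 {v. 0 \<le> v \<and> \<tau> < descent_rate g v}))"

context
  fixes g :: "real \<Rightarrow> real"
  assumes g: "convex_profile g"
begin

lemma convex_profile_antimono: "0 \<le> u \<Longrightarrow> u \<le> v \<Longrightarrow> g v \<le> g u"
  and convex_profile_0: "g 0 = 1"
  and convex_profile_lower: "0 \<le> u \<Longrightarrow> max 0 (1 - u) \<le> g u"
  and convex_profile_convex: "convex_on {0..} g"
  using g by (auto simp: convex_profile_def)

lemma descent_quotient_bounds:
  assumes "0 \<le> u" "0 < h"
  shows "0 \<le> (g u - g (u + h)) / h" and "(g u - g (u + h)) / h \<le> 1"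
proof -
  show "0 \<le> (g u - g (u + h)) / h"
    using convex_profile_antimono[of u "u + h"] assms by simp
  have "(g u - g (u + h)) / h \<le> (g 0 - g (u + h)) / (u + h)"
  proof (cases "u = 0")
    case False
    then have "(g 0 - g (u + h)) / (0 - (u + h)) \<le> (g u - g (u + h)) / (u - (u + h))"
      using assms by (intro convex_on_slope_le(2)[OF convex_profile_convex]) auto
    moreover have "0 - (u + h) = - (u + h)" "u - (u + h) = - h" by simp_all
    ultimately show ?thesis by (simp only: divide_minus_right)
  qed simp
  also have "\<dots> \<le> 1"
    using convex_profile_lower[of "u + h"] convex_profile_0 assms by (simp add: divide_le_eq)
  finally show "(g u - g (u + h)) / h \<le> 1" .
qed

lemma bdd_above_descent_quotients:
  "0 \<le> u \<Longrightarrow> bdd_above ((\<lambda>h. (g u - g (u + h)) / h) ` {0<..})"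
  using descent_quotient_bounds(2) by (intro bdd_aboveI[of _ 1]) auto

lemma descent_quotient_le_descent_rate:
  "0 \<le> u \<Longrightarrow> 0 < h \<Longrightarrow> (g u - g (u + h)) / h \<le> descent_rate g u"
  unfolding descent_rate_def by (rule cSup_upper[OF _ bdd_above_descent_quotients]) auto

lemma descent_rate_bounds:
  assumes "0 \<le> u"
  shows "0 \<le> descent_rate g u" and "descent_rate g u \<le> 1"
  using descent_quotient_bounds[OF assms, of 1] descent_quotient_le_descent_rate[OF assms, of 1]
    descent_quotient_bounds(2)[OF assms]
  by (auto simp: descent_rate_def intro!: cSup_least)

lemma descent_rate_le_slope:
  assumes "0 \<le> u" "u < v"
  shows "descent_rate g v \<le> (g u - g v) / (v - u)"
  unfolding descent_rate_def
proof (rule cSup_least)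
  fix q assume "q \<in> (\<lambda>h. (g v - g (v + h)) / h) ` {0<..}"
  then obtain h where h: "0 < h" "q = (g v - g (v + h)) / h" by auto
  have "(g u - g v) / (u - v) \<le> (g u - g (v + h)) / (u - (v + h))"
    using assms h by (intro convex_on_slope_le(1)[OF convex_profile_convex]) auto
  also have "\<dots> \<le> (g v - g (v + h)) / (v - (v + h))"
    using assms h by (intro convex_on_slope_le(2)[OF convex_profile_convex]) auto
  also have "\<dots> = - q" using h by simp
  finally have "(g u - g v) / (u - v) \<le> - q" .
  moreover have "(g u - g v) / (v - u) = - ((g u - g v) / (u - v))"
    by (metis divide_minus_right minus_diff_eq)
  ultimately show "q \<le> (g u - g v) / (v - u)" by linarith
qed auto

lemma descent_rate_sandwich:
  assumes "0 \<le> u" "u < v"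
  shows "(v - u) * descent_rate g v \<le> g u - g v" and "g u - g v \<le> (v - u) * descent_rate g u"
  using descent_rate_le_slope[OF assms] descent_quotient_le_descent_rate[of u "v - u"] assms
  by (simp_all add: le_divide_eq divide_le_eq mult.commute)

lemma descent_rate_antimono:
  assumes "0 \<le> u" "u \<le> v"
  shows "descent_rate g v \<le> descent_rate g u"
proof (cases "u = v")
  case False
  then have "u < v" using assms by simp
  with descent_rate_sandwich[OF assms(1) this]
  have "(v - u) * descent_rate g v \<le> (v - u) * descent_rate g u" by linarith
  with \<open>u < v\<close> show ?thesis by (simp add: mult_le_cancel_left_pos)
qed simp

lemma descent_level_bound:
  assumes "0 < \<tau>" "0 \<le> v" "\<tau> < descent_rate g v"
  shows "v \<le> 1 / \<tau>"
proof (cases "v = 0")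
  case False
  then have "v * \<tau> \<le> v * descent_rate g v" using assms by (intro mult_left_mono) auto
  also have "\<dots> \<le> g 0 - g v" using descent_rate_sandwich(1)[of 0 v] assms False by simp
  also have "\<dots> \<le> 1" using convex_profile_0 convex_profile_lower[of v] assms by simp
  finally show ?thesis using assms by (simp add: le_divide_eq mult.commute)
qed (use assms in simp)

lemma bdd_above_descent_level:
  "0 < \<tau> \<Longrightarrow> bdd_above (insert 0 {v. 0 \<le> v \<and> \<tau> < descent_rate g v})"
  using descent_level_bound by (intro bdd_aboveI[of _ "1 / \<tau>"]) auto

lemma descent_inverse_nonneg: "0 \<le> descent_inverse g \<tau>"
  unfolding descent_inverse_def using cSup_upper[OF _ bdd_above_descent_level] by auto

lemma le_descent_inverse:
  "0 < \<tau> \<Longrightarrow> 0 \<le> v \<Longrightarrow> \<tau> < descent_rate g v \<Longrightarrow> v \<le> descent_inverse g \<tau>"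
  unfolding descent_inverse_def using cSup_upper[OF _ bdd_above_descent_level] by auto

lemma less_descent_inverse_imp:
  assumes "0 < \<tau>" "0 \<le> u" "u < descent_inverse g \<tau>"
  shows "\<tau> < descent_rate g u"
proof (rule ccontr)
  assume "\<not> \<tau> < descent_rate g u"
  then have "v \<le> u" if "0 \<le> v" "\<tau> < descent_rate g v" for v
    using that descent_rate_antimono[of u v] assms by (cases "v \<le> u") auto
  then have "descent_inverse g \<tau> \<le> u"
    unfolding descent_inverse_def using assms by (auto intro!: cSup_least)
  with assms show False by simp
qed

lemma descent_inverse_antimono:
  "0 < \<tau> \<Longrightarrow> \<tau> \<le> \<tau>' \<Longrightarrow> descent_inverse g \<tau>' \<le> descent_inverse g \<tau>"
  unfolding descent_inverse_def by (auto intro!: cSup_subset_mono bdd_above_descent_level)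

lemma borel_measurable_descent_inverse [measurable]: "descent_inverse g \<in> borel_measurable borel"
proof -
  have "(\<lambda>\<tau>. - descent_inverse g \<tau>) \<in> borel_measurable borel"
  proof (rule borel_measurable_piecewise_mono[of "{{..0}, {0<..}}"])
    show "mono_on S (\<lambda>\<tau>. - descent_inverse g \<tau>)" if "S \<in> {{..0}, {0<..}}" for S
      using that descent_inverse_antimono by (auto simp: mono_on_def descent_inverse_def)
  qed auto
  then show ?thesis by simp
qed

lemma set_integrable_min_descent_inverse:
  "set_integrable lborel {0<..<1} (\<lambda>\<tau>. min u (descent_inverse g \<tau>))"
  unfolding set_integrable_def
proof (rule Bochner_Integration.integrable_bound)
  show "integrable lborel (\<lambda>\<tau>. \<bar>u\<bar> * indicator {0<..<1::real} \<tau>)"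
    by (intro integrable_mult_right integrable_real_indicator) auto
  have "\<bar>min u (descent_inverse g \<tau>)\<bar> \<le> \<bar>u\<bar>" for \<tau>
    using descent_inverse_nonneg[of \<tau>] by (auto simp: min_def)
  then show "AE \<tau> in lborel. norm (indicator {0<..<1} \<tau> *\<^sub>R min u (descent_inverse g \<tau>))
      \<le> norm (\<bar>u\<bar> * indicator {0<..<1::real} \<tau>)"
    by (intro AE_I2) (auto simp: indicator_def)
qed measurable

lemma integral_min_descent_inverse_sandwich:
  assumes "0 \<le> u" "u < v"
  defines "R w \<equiv> LBINT \<tau>:{0<..<1}. min w (descent_inverse g \<tau>)"
  shows "(v - u) * descent_rate g v \<le> R v - R u" and "R v - R u \<le> (v - u) * descent_rate g u"
proof -
  have R: "R v - R u = (LBINT \<tau>:{0<..<1}. min v (descent_inverse g \<tau>) - min u (descent_inverse g \<tau>))"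
    unfolding R_def by (simp add: set_integral_diff set_integrable_min_descent_inverse)
  have int: "set_integrable lborel {0<..<1}
      (\<lambda>\<tau>. min v (descent_inverse g \<tau>) - min u (descent_inverse g \<tau>))"
    by (simp add: set_integral_diff set_integrable_min_descent_inverse)
  have step: "set_integrable lborel {0<..<1} (\<lambda>\<tau>. (v - u) * indicator {..<p} \<tau>)
      \<and> (LBINT \<tau>:{0<..<1}. (v - u) * indicator {..<p} \<tau>) = (v - u) * p" if "0 \<le> p" "p \<le> 1" for p
    using set_integral_indicator_lessThan[OF that] by (simp add: set_integral_mult_right)
  note rates = descent_rate_bounds[OF assms(1)] descent_rate_bounds[of v] assms
  have "(LBINT \<tau>:{0<..<1}. (v - u) * indicator {..<descent_rate g v} \<tau>)
      \<le> (LBINT \<tau>:{0<..<1}. min v (descent_inverse g \<tau>) - min u (descent_inverse g \<tau>))"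
    using rates int step[of "descent_rate g v"] le_descent_inverse[of _ v]
    by (intro set_integral_mono) (auto simp: indicator_def)
  then show "(v - u) * descent_rate g v \<le> R v - R u"
    using step[of "descent_rate g v"] rates R by simp
  have "(LBINT \<tau>:{0<..<1}. min v (descent_inverse g \<tau>) - min u (descent_inverse g \<tau>))
      \<le> (LBINT \<tau>:{0<..<1}. (v - u) * indicator {..<descent_rate g u} \<tau>)"
  proof (rule set_integral_mono[OF int conjunct1[OF step]])
    fix \<tau> :: real assume \<tau>: "\<tau> \<in> {0<..<1}"
    show "min v (descent_inverse g \<tau>) - min u (descent_inverse g \<tau>)
        \<le> (v - u) * indicator {..<descent_rate g u} \<tau>"
    proof (cases "u < descent_inverse g \<tau>")
      case True
      then have "\<tau> < descent_rate g u" using \<tau> assms by (intro less_descent_inverse_imp) auto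
      then show ?thesis using assms by (auto simp: min_def)
    qed (use assms in \<open>auto simp: min_def indicator_def\<close>)
  qed (use rates in auto)
  then show "R v - R u \<le> (v - u) * descent_rate g u"
    using step[of "descent_rate g u"] rates R by simp
qed

text \<open>The increments of g and of the integral are squeezed between the same bounds, so their
  sum is constant.\<close>

lemma convex_profile_eq_1_minus_integral:
  assumes "0 \<le> u"
  shows "g u = 1 - (LBINT \<tau>:{0<..<1}. min u (descent_inverse g \<tau>))"
proof -
  define D where "D w = g w + (LBINT \<tau>:{0<..<1}. min w (descent_inverse g \<tau>))" for w
  have "D u = D 0"
  proof (rule eq_if_increments_le_decrements[OF _ assms])
    fix v w :: real assume "0 \<le> v" "v \<le> w"
    then show "\<bar>D w - D v\<bar> \<le> (w - v) * (descent_rate g v - descent_rate g w)"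
      using descent_rate_sandwich[of v w] integral_min_descent_inverse_sandwich[of v w]
      by (cases "v = w") (auto simp: D_def abs_le_iff algebra_simps)
  qed
  moreover have "min 0 (descent_inverse g \<tau>) = 0" for \<tau>
    using descent_inverse_nonneg[of \<tau>] by simp
  ultimately show ?thesis by (simp add: D_def convex_profile_0)
qed

lemma set_integrable_descent_inverse: "set_integrable lborel {0<..<1} (descent_inverse g)"
proof -
  define f where "f n \<tau> = indicator {0<..<1} \<tau> * min (real n) (descent_inverse g \<tau>)" for n :: nat and \<tau>
  have int: "integrable lborel (f n)" for n
    using set_integrable_min_descent_inverse[of "real n"] by (simp add: set_integrable_def f_def[abs_def])
  have mono: "AE \<tau> in lborel. mono (\<lambda>n. f n \<tau>)"
    by (intro AE_I2) (auto simp: mono_def f_def indicator_def intro!: min.mono)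
  have lim: "AE \<tau> in lborel. (\<lambda>n. f n \<tau>) \<longlonglongrightarrow> indicator {0<..<1} \<tau> * descent_inverse g \<tau>"
  proof (intro AE_I2 tendsto_eventually)
    fix \<tau>
    obtain N :: nat where "descent_inverse g \<tau> \<le> real N" using real_arch_simple by blast
    then show "eventually (\<lambda>n. f n \<tau> = indicator {0<..<1} \<tau> * descent_inverse g \<tau>) sequentially"
      by (auto simp: eventually_sequentially f_def intro!: exI[of _ N])
  qed
  have "integral\<^sup>L lborel (f n) = 1 - g (real n)" for n
    using convex_profile_eq_1_minus_integral[of "real n"]
    by (simp add: f_def[abs_def] set_lebesgue_integral_def)
  then have "integral\<^sup>L lborel (f n) \<le> 1" for n
    using convex_profile_lower[of "real n"] by simp
  moreover have "incseq (\<lambda>n. integral\<^sup>L lborel (f n))"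
    using int by (auto simp: incseq_def f_def indicator_def intro!: integral_mono)
  ultimately obtain L where "(\<lambda>n. integral\<^sup>L lborel (f n)) \<longlonglongrightarrow> L"
    using incseq_convergent by blast
  then have "integrable lborel (\<lambda>\<tau>. indicator {0<..<1} \<tau> * descent_inverse g \<tau>)"
    by (intro integrable_monotone_convergence[OF int mono lim]) auto
  then show ?thesis by (simp add: set_integrable_def)
qed

lemma convex_profile_layer_cake:
  assumes "0 \<le> u"
  shows "g u = (LBINT \<tau>:{0<..<1}. 1 - min u (descent_inverse g \<tau>))"
proof -
  have "set_integrable lborel {0<..<1} (\<lambda>\<tau>::real. 1::real)"
    by (simp add: set_integrable_def)
  then show ?thesis
    using convex_profile_eq_1_minus_integral[OF assms] set_integrable_min_descent_inverse[of u]
    by (simp add: set_integral_const)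
qed

end

section \<open>Mixtures of truncated parabolas\<close>

context
  fixes t :: "real \<Rightarrow> real"
  assumes t_meas [measurable]: "t \<in> borel_measurable borel"
    and t_nonneg: "\<And>\<tau>. 0 \<le> t \<tau>"
    and t_int: "set_integrable lborel {0<..<1} t"
begin

lemma integrable_log_kernel_mixture:
  "integrable (lborel \<Otimes>\<^sub>M lborel)
     (\<lambda>(\<tau>, y). indicator {0<..<1} \<tau> * (indicator {0<..} y * (log_kernel x y * (1 - min (y\<^sup>2) (t \<tau>)))))"
    (is "integrable _ (case_prod ?F)")
proof -
  have F_meas: "case_prod ?F \<in> borel_measurable (lborel \<Otimes>\<^sub>M lborel)"
    by measurable
  have inner: "integrable lborel (?F \<tau>)" for \<tau>
    using log_kernel_truncated_parabola_integral(1)[of "sqrt (t \<tau>)" x] t_nonneg[of \<tau>]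
    by (simp add: set_integrable_def)
  define C where "C = (LBINT y. indicator {0<..} y * \<bar>log_kernel x y\<bar>)"
  have K: "integrable lborel (\<lambda>y. indicator {0<..} y * \<bar>log_kernel x y\<bar>)"
    using integrable_norm[OF log_kernel_integral(1)[of x, unfolded set_integrable_def]]
    by (simp add: abs_mult)
  have norm_inner: "(LBINT y. norm (?F \<tau> y)) \<le> indicator {0<..<1} \<tau> * (1 + t \<tau>) * C" for \<tau>
  proof -
    have "norm (?F \<tau> y)
        \<le> indicator {0<..<1} \<tau> * (1 + t \<tau>) * (indicator {0<..} y * \<bar>log_kernel x y\<bar>)" for y
    proof -
      have "0 \<le> min (y\<^sup>2) (t \<tau>)" "min (y\<^sup>2) (t \<tau>) \<le> t \<tau>" using t_nonneg[of \<tau>] by auto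
      then have "\<bar>1 - min (y\<^sup>2) (t \<tau>)\<bar> \<le> 1 + t \<tau>" unfolding abs_le_iff by linarith
      then show ?thesis
        by (auto simp: abs_mult indicator_def mult.commute intro: mult_left_mono)
    qed
    then show ?thesis
      using inner[of \<tau>] K unfolding C_def
      by (subst integral_mult_right_zero[symmetric]) (intro integral_mono; simp)
  qed
  have "integrable lborel (\<lambda>\<tau>. indicator {0<..<1} \<tau> * (1 + t \<tau>) * C)"
    using t_int by (simp add: set_integrable_def algebra_simps)
  then have "integrable lborel (\<lambda>\<tau>. LBINT y. norm (?F \<tau> y))"
  proof (rule Bochner_Integration.integrable_bound)
    show "(\<lambda>\<tau>. LBINT y. norm (?F \<tau> y)) \<in> borel_measurable lborel"
      using F_meas by measurable
    have "0 \<le> C" unfolding C_def by simp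
    then show "AE \<tau> in lborel. norm (LBINT y. norm (?F \<tau> y))
        \<le> norm (indicator {0<..<1} \<tau> * (1 + t \<tau>) * C)"
      using norm_inner t_nonneg by (intro AE_I2) (auto simp: abs_mult)
  qed
  then show ?thesis
    using inner by (intro lborel_pair.Fubini_integrable[OF F_meas]) auto
qed

lemma log_kernel_mixture_integral:
  assumes \<omega>: "\<And>y. 0 < y \<Longrightarrow> \<omega> y = (LBINT \<tau>:{0<..<1}. 1 - min (y\<^sup>2) (t \<tau>))"
  shows "(LBINT y:{0<..}. log_kernel x y * \<omega> y)
    = (LBINT \<tau>:{0<..<1}. parabola_transform x (sqrt (t \<tau>)))"
proof -
  define F where
    "F \<tau> y = indicator {0<..<1} \<tau> * (indicator {0<..} y * (log_kernel x y * (1 - min (y\<^sup>2) (t \<tau>))))"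
    for \<tau> y
  have "(LBINT y. LBINT \<tau>. F \<tau> y) = (LBINT \<tau>. LBINT y. F \<tau> y)"
    using integrable_log_kernel_mixture[of x] unfolding F_def
    by (rule lborel_pair.Fubini_integral)
  moreover have "(LBINT \<tau>. F \<tau> y) = indicator {0<..} y * (log_kernel x y * \<omega> y)" for y
  proof (cases "0 < y")
    case True
    then have "F \<tau> y = log_kernel x y * (indicator {0<..<1} \<tau> * (1 - min (y\<^sup>2) (t \<tau>)))" for \<tau>
      by (simp add: F_def mult_ac)
    then show ?thesis using \<omega>[OF True] True by (simp add: set_lebesgue_integral_def)
  qed (simp add: F_def)
  moreover have "(LBINT y. F \<tau> y) = indicator {0<..<1} \<tau> * parabola_transform x (sqrt (t \<tau>))" for \<tau>
    using log_kernel_truncated_parabola_integral(2)[of "sqrt (t \<tau>)" x] t_nonneg[of \<tau>]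
    by (simp add: F_def set_lebesgue_integral_def)
  ultimately show ?thesis
    by (simp add: set_lebesgue_integral_def)
qed

lemma set_integrable_parabola_mixture:
  "set_integrable lborel {0<..<1} (\<lambda>\<tau>. parabola_transform x (sqrt (t \<tau>)))"
  unfolding set_integrable_def
proof (rule Bochner_Integration.integrable_bound)
  show "integrable lborel (\<lambda>\<tau>. 4 * \<bar>x\<bar> * (indicator {0<..<1} \<tau> * t \<tau>))"
    using t_int by (simp add: set_integrable_def)
  show "(\<lambda>\<tau>. indicator {0<..<1} \<tau> *\<^sub>R parabola_transform x (sqrt (t \<tau>)))
      \<in> borel_measurable lborel"
    unfolding parabola_transform_def x2ln_def by measurable
  show "AE \<tau> in lborel. norm (indicator {0<..<1} \<tau> *\<^sub>R parabola_transform x (sqrt (t \<tau>)))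
      \<le> norm (4 * \<bar>x\<bar> * (indicator {0<..<1} \<tau> * t \<tau>))"
    using abs_parabola_transform_le[of "sqrt (t _)" x] t_nonneg
    by (intro AE_I2) (auto simp: indicator_def abs_mult mult_ac)
qed

lemma parabola_mixture_has_real_derivative:
  "((\<lambda>x. LBINT \<tau>:{0<..<1}. parabola_transform x (sqrt (t \<tau>))) has_real_derivative
     (LBINT \<tau>:{0<..<1}. parabola_transform_deriv x (sqrt (t \<tau>)))) (at x)"
  unfolding set_lebesgue_integral_def real_scaleR_def
proof (rule has_real_derivative_integral)
  show "integrable lborel (\<lambda>\<tau>. indicator {0<..<1} \<tau> * parabola_transform x (sqrt (t \<tau>)))" for x
    using set_integrable_parabola_mixture[of x] by (simp add: set_integrable_def)
  show "((\<lambda>x. indicator {0<..<1} \<tau> * parabola_transform x (sqrt (t \<tau>))) has_real_derivative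
      indicator {0<..<1} \<tau> * parabola_transform_deriv x (sqrt (t \<tau>))) (at x)" for x \<tau>
    by (intro DERIV_cmult has_real_derivative_parabola_transform)
  show "\<bar>indicator {0<..<1} \<tau> * parabola_transform_deriv x (sqrt (t \<tau>))\<bar>
      \<le> 4 * (indicator {0<..<1} \<tau> * t \<tau>)" for x \<tau>
    using abs_parabola_transform_deriv_le[of "sqrt (t \<tau>)" x] t_nonneg[of \<tau>]
    by (auto simp: indicator_def)
  show "integrable lborel (\<lambda>\<tau>. 4 * (indicator {0<..<1} \<tau> * t \<tau>))"
    using t_int by (simp add: set_integrable_def)
  show "(\<lambda>\<tau>. indicator {0<..<1} \<tau> * parabola_transform_deriv x (sqrt (t \<tau>)))
      \<in> borel_measurable lborel"
    unfolding parabola_transform_deriv_def xln_def by measurable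
qed

lemma parabola_mixture_deriv_nonneg:
  "0 \<le> x \<Longrightarrow> 0 \<le> (LBINT \<tau>:{0<..<1}. parabola_transform_deriv x (sqrt (t \<tau>)))"
  unfolding set_lebesgue_integral_def
  using parabola_transform_deriv_bounds t_nonneg by (intro Bochner_Integration.integral_nonneg) auto

lemma concave_on_parabola_mixture_sqrt:
  "concave_on {0..} (\<lambda>\<sigma>. LBINT \<tau>:{0<..<1}. parabola_transform (sqrt \<sigma>) (sqrt (t \<tau>)))"
  unfolding set_lebesgue_integral_def real_scaleR_def
proof (rule concave_on_integral)
  show "concave_on {0..} (\<lambda>\<sigma>. indicator {0<..<1} \<tau> * parabola_transform (sqrt \<sigma>) (sqrt (t \<tau>)))"
    for \<tau>
    using t_nonneg by (intro concave_on_cmul concave_on_parabola_transform_sqrt) auto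
  show "integrable lborel (\<lambda>\<tau>. indicator {0<..<1} \<tau> * parabola_transform (sqrt \<sigma>) (sqrt (t \<tau>)))"
    for \<sigma>
    using set_integrable_parabola_mixture[of "sqrt \<sigma>"] by (simp add: set_integrable_def)
qed

end

lemma DD_convex_profile:
  assumes "\<omega> \<in> DD a"
  shows "convex_profile (\<lambda>u. \<omega> (sqrt u))"
proof -
  have lower: "max 0 (1 - (sqrt u)\<^sup>2) \<le> \<omega> (sqrt u)" for u
    using assms by (simp add: DD_def)
  have "max 0 (1 - u) \<le> \<omega> (sqrt u)" if "0 \<le> u" for u
    using lower[of u] that by simp
  then show ?thesis
    using assms unfolding DD_def convex_profile_def by auto
qed

lemma T_eq_parabola_mixture:
  assumes "\<omega> \<in> DD a"
  shows "T \<omega> x = 1 / pi *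
    (LBINT \<tau>:{0<..<1}. parabola_transform x (sqrt (descent_inverse (\<lambda>u. \<omega> (sqrt u)) \<tau>)))"
proof -
  define g where "g u = \<omega> (sqrt u)" for u
  have g: "convex_profile g"
    unfolding g_def[abs_def] using assms by (rule DD_convex_profile)
  have "\<omega> y = (LBINT \<tau>:{0<..<1}. 1 - min (y\<^sup>2) (descent_inverse g \<tau>))" if "0 < y" for y
    using convex_profile_layer_cake[OF g, of "y\<^sup>2"] that by (simp add: g_def)
  then show ?thesis
    using log_kernel_mixture_integral[OF borel_measurable_descent_inverse[OF g]
        descent_inverse_nonneg[OF g] set_integrable_descent_inverse[OF g]]
    by (simp add: T_eq_log_kernel_integral g_def[abs_def])
qed

theorem mainTheorem9:
  fixes a :: real and \<omega> :: "real \<Rightarrow> real"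
  assumes "a < 1" and "\<omega> \<in> DD a"
  shows "T \<omega> 0 = 0
    \<and> (\<forall>x\<ge>0. \<exists>D. (T \<omega> has_real_derivative D) (at x) \<and> D \<ge> 0)
    \<and> concave_on {0..} (\<lambda>s. T \<omega> (sqrt s))"
proof -
  define t where "t = descent_inverse (\<lambda>u. \<omega> (sqrt u))"
  have g: "convex_profile (\<lambda>u. \<omega> (sqrt u))"
    using assms(2) by (rule DD_convex_profile)
  have t: "t \<in> borel_measurable borel" "\<And>\<tau>. 0 \<le> t \<tau>" "set_integrable lborel {0<..<1} t"
    using borel_measurable_descent_inverse[OF g] descent_inverse_nonneg[OF g]
      set_integrable_descent_inverse[OF g] by (simp_all add: t_def)
  have T: "T \<omega> x = 1 / pi * (LBINT \<tau>:{0<..<1}. parabola_transform x (sqrt (t \<tau>)))" for x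
    unfolding t_def by (rule T_eq_parabola_mixture[OF assms(2)])
  have "T \<omega> 0 = 0" by (simp add: T)
  moreover have "\<exists>D. (T \<omega> has_real_derivative D) (at x) \<and> 0 \<le> D" if "0 \<le> x" for x
  proof (intro exI conjI)
    show "(T \<omega> has_real_derivative
        1 / pi * (LBINT \<tau>:{0<..<1}. parabola_transform_deriv x (sqrt (t \<tau>)))) (at x)"
      unfolding T[abs_def] by (intro DERIV_cmult parabola_mixture_has_real_derivative[OF t])
    show "0 \<le> 1 / pi * (LBINT \<tau>:{0<..<1}. parabola_transform_deriv x (sqrt (t \<tau>)))"
      using parabola_mixture_deriv_nonneg[OF t that] by simp
  qed
  moreover have "concave_on {0..} (\<lambda>s. T \<omega> (sqrt s))"
    unfolding T using concave_on_parabola_mixture_sqrt[OF t] by (intro concave_on_cmul) auto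
  ultimately show ?thesis by blast
qed

end
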